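(* For every positive integer $n$, there exists a connected graph $G$ such that $\det(G) = 2n$ and $\det'(G) = n$.
   Context: A vertex subset $S$ of $G$ is a vertex determining set if the only automorphism of $G$ fixing every vertex of $S$ is the identity; the determining number $\det(G)$ is the minimum size of a vertex determining set. For a graph $G$ with at most one isolated vertex and no component isomorphic to $K_2$, an edge subset $T$ is an edge determining set if the only automorphism $\phi$ of $G$ satisfying $\{\phi(u),\phi(v)\}=\{u,v\}$ for all $\{u,v\}\in T$ is the identity; the determining index $\det'(G)$ is the minimum size of an edge determining set. *)

theory Defs
  imports Main
begin

definition simple_graph :: "'a set \<Rightarrow> 'a set set \<Rightarrow> bool" where
  "simple_graph V E \<longleftrightarrow> finite V \<and>
     (\<forall>e\<in>E. \<exists>u v. e = {u, v} \<and> u \<noteq> v \<and> u \<in> V \<and> v \<in> V)"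

definition adj :: "'a set set \<Rightarrow> 'a \<Rightarrow> 'a \<Rightarrow> bool" where
  "adj E u v \<longleftrightarrow> {u, v} \<in> E"

definition connected_graph :: "'a set \<Rightarrow> 'a set set \<Rightarrow> bool" where
  "connected_graph V E \<longleftrightarrow> simple_graph V E \<and> V \<noteq> {} \<and>
     (\<forall>u\<in>V. \<forall>v\<in>V. (adj E)\<^sup>*\<^sup>* u v)"

definition automorphism :: "'a set \<Rightarrow> 'a set set \<Rightarrow> ('a \<Rightarrow> 'a) \<Rightarrow> bool" where
  "automorphism V E \<phi> \<longleftrightarrow> bij_betw \<phi> V V \<and>
     (\<forall>u\<in>V. \<forall>v\<in>V. {u, v} \<in> E \<longleftrightarrow> {\<phi> u, \<phi> v} \<in> E)"

definition vertex_determining_set :: "'a set \<Rightarrow> 'a set set \<Rightarrow> 'a set \<Rightarrow> bool" where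
  "vertex_determining_set V E S \<longleftrightarrow> S \<subseteq> V \<and>
     (\<forall>\<phi>. automorphism V E \<phi> \<and> (\<forall>x\<in>S. \<phi> x = x) \<longrightarrow> (\<forall>x\<in>V. \<phi> x = x))"

definition determining_number :: "'a set \<Rightarrow> 'a set set \<Rightarrow> nat" where
  "determining_number V E = Min {card S | S. vertex_determining_set V E S}"

text \<open>Hypothesis under which the determining index is defined: at most one isolated vertex
  and no connected component isomorphic to K2.\<close>
definition isolated :: "'a set \<Rightarrow> 'a set set \<Rightarrow> 'a \<Rightarrow> bool" where
  "isolated V E v \<longleftrightarrow> v \<in> V \<and> (\<forall>w. {v, w} \<notin> E)"

definition K2_component :: "'a set set \<Rightarrow> 'a \<Rightarrow> 'a \<Rightarrow> bool" where
  "K2_component E u v \<longleftrightarrow> u \<noteq> v \<and> {u, v} \<in> E \<and>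
     (\<forall>w. {u, w} \<in> E \<longrightarrow> w = v) \<and> (\<forall>w. {v, w} \<in> E \<longrightarrow> w = u)"

definition det_index_admissible :: "'a set \<Rightarrow> 'a set set \<Rightarrow> bool" where
  "det_index_admissible V E \<longleftrightarrow>
     card {v. isolated V E v} \<le> 1 \<and> \<not> (\<exists>u v. K2_component E u v)"

definition edge_determining_set :: "'a set \<Rightarrow> 'a set set \<Rightarrow> 'a set set \<Rightarrow> bool" where
  "edge_determining_set V E T \<longleftrightarrow> T \<subseteq> E \<and>
     (\<forall>\<phi>. automorphism V E \<phi> \<and> (\<forall>u v. {u, v} \<in> T \<longrightarrow> {\<phi> u, \<phi> v} = {u, v})
        \<longrightarrow> (\<forall>x\<in>V. \<phi> x = x))"

definition determining_index :: "'a set \<Rightarrow> 'a set set \<Rightarrow> nat" where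
  "determining_index V E = Min {card T | T. edge_determining_set V E T}"

end

theory Submission
  imports Defs "HOL-Combinatorics.Transposition"
begin

text \<open>
  The graph consists of a hub 0 with a pendant vertex 1 and n gadgets; gadget i is the
  4-cycle xa-ya-xb-yb whose vertices xa, xb are joined to the hub. In each gadget xa, xb
  are twins (equal neighbourhoods) and so are ya, yb. Swapping two twins is an
  automorphism, so a vertex determining set meets each of the 2n twin pairs, and an edge
  determining set contains an edge at each x-pair; since an edge touches at most one
  x-pair, this gives the lower bounds 2n and n. Conversely, fixing xa and ya in every
  gadget forces every vertex to be fixed, and fixing the edge {xa, ya} setwise does the
  same, because xa and ya have different degrees and so cannot be swapped.
\<close>

definition nbhd :: "'a set set \<Rightarrow> 'a \<Rightarrow> 'a set" where
  "nbhd E v = {w. {v, w} \<in> E}"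

lemma mem_nbhd_iff: "w \<in> nbhd E v \<longleftrightarrow> {v, w} \<in> E"
  by (simp add: nbhd_def)

definition twins :: "'a set set \<Rightarrow> 'a \<Rightarrow> 'a \<Rightarrow> bool" where
  "twins E u v \<longleftrightarrow> u \<noteq> v \<and> nbhd E u = nbhd E v"

lemma simple_graph_edge_vertices:
  assumes "simple_graph V E" "{a, b} \<in> E"
  shows "a \<in> V" "b \<in> V"
proof -
  from assms obtain u v where "{a, b} = {u, v}" "u \<in> V" "v \<in> V"
    unfolding simple_graph_def by blast
  then show "a \<in> V" "b \<in> V" by (auto simp: doubleton_eq_iff)
qed

lemma simple_graph_edge_doubleton:
  assumes "simple_graph V E" "e \<in> E" "a \<in> e" "b \<in> e" "a \<noteq> b"
  shows "e = {a, b}"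
proof -
  from assms(1,2) obtain u v where "e = {u, v}" unfolding simple_graph_def by blast
  with assms(3-5) show ?thesis by auto
qed

lemma simple_graph_finite_edges:
  assumes "simple_graph V E"
  shows "finite E"
proof (rule finite_subset)
  show "E \<subseteq> Pow V"
  proof
    fix e assume "e \<in> E"
    with assms obtain u v where "e = {u, v}" "u \<in> V" "v \<in> V" unfolding simple_graph_def by blast
    then show "e \<in> Pow V" by simp
  qed
  show "finite (Pow V)" using assms by (simp add: simple_graph_def)
qed

lemma nbhd_subset_vertices: "simple_graph V E \<Longrightarrow> nbhd E v \<subseteq> V"
  using simple_graph_edge_vertices(2) by (auto simp: mem_nbhd_iff)

lemma automorphism_edge_iff:
  "automorphism V E \<phi> \<Longrightarrow> u \<in> V \<Longrightarrow> v \<in> V \<Longrightarrow> {\<phi> u, \<phi> v} \<in> E \<longleftrightarrow> {u, v} \<in> E"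
  unfolding automorphism_def by blast

lemma automorphism_inj_on: "automorphism V E \<phi> \<Longrightarrow> inj_on \<phi> V"
  by (simp add: automorphism_def bij_betw_def)

lemma automorphism_nbhd:
  assumes "automorphism V E \<phi>" "simple_graph V E" "w \<in> nbhd E v"
  shows "\<phi> w \<in> nbhd E (\<phi> v)"
proof -
  have "{v, w} \<in> E" using assms(3) by (simp add: mem_nbhd_iff)
  moreover from this have "v \<in> V" "w \<in> V" using simple_graph_edge_vertices[OF assms(2)] by auto
  ultimately show ?thesis using assms(1) by (simp add: automorphism_edge_iff mem_nbhd_iff)
qed

lemma automorphism_image_nbhd:
  assumes A: "automorphism V E \<phi>" and G: "simple_graph V E" and v: "v \<in> V"
  shows "\<phi> ` nbhd E v = nbhd E (\<phi> v)"
proof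
  show "\<phi> ` nbhd E v \<subseteq> nbhd E (\<phi> v)"
    using automorphism_nbhd[OF A G] by blast
  show "nbhd E (\<phi> v) \<subseteq> \<phi> ` nbhd E v"
  proof
    fix w assume w: "w \<in> nbhd E (\<phi> v)"
    then have "w \<in> V" using nbhd_subset_vertices[OF G] by blast
    then obtain w' where w': "w' \<in> V" "w = \<phi> w'"
      using A unfolding automorphism_def bij_betw_def by blast
    then have "w' \<in> nbhd E v" using w v by (simp add: automorphism_edge_iff[OF A] mem_nbhd_iff)
    then show "w \<in> \<phi> ` nbhd E v" using w' by blast
  qed
qed

lemma automorphism_degree:
  assumes A: "automorphism V E \<phi>" and G: "simple_graph V E" and v: "v \<in> V"
  shows "card (nbhd E (\<phi> v)) = card (nbhd E v)"
proof -
  have "inj_on \<phi> (nbhd E v)"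
    using inj_on_subset[OF automorphism_inj_on[OF A] nbhd_subset_vertices[OF G]] .
  then show ?thesis using automorphism_image_nbhd[OF assms] card_image by fastforce
qed

lemma twins_nbhd_transpose: "twins E u v \<Longrightarrow> nbhd E (transpose u v x) = nbhd E x"
  unfolding twins_def transpose_def by simp

lemma twins_transpose_automorphism:
  assumes "u \<in> V" "v \<in> V" "twins E u v"
  shows "automorphism V E (transpose u v)"
proof -
  let ?\<tau> = "transpose u v"
  have "{?\<tau> a, ?\<tau> b} \<in> E \<longleftrightarrow> {a, b} \<in> E" for a b
  proof -
    have "{?\<tau> a, ?\<tau> b} \<in> E \<longleftrightarrow> {a, ?\<tau> b} \<in> E"
      using twins_nbhd_transpose[OF assms(3), of a] by (simp add: set_eq_iff mem_nbhd_iff)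
    also have "\<dots> \<longleftrightarrow> {?\<tau> b, a} \<in> E" by (simp add: insert_commute)
    also have "\<dots> \<longleftrightarrow> {b, a} \<in> E"
      using twins_nbhd_transpose[OF assms(3), of b] by (simp add: set_eq_iff mem_nbhd_iff)
    finally show ?thesis by (simp add: insert_commute)
  qed
  then show ?thesis unfolding automorphism_def using assms(1,2) by simp
qed

lemma vertex_determining_set_meets_twins:
  assumes S: "vertex_determining_set V E S" and "u \<in> V" "v \<in> V" "twins E u v"
  shows "u \<in> S \<or> v \<in> S"
proof (rule ccontr)
  assume "\<not> (u \<in> S \<or> v \<in> S)"
  then have "\<forall>x\<in>S. transpose u v x = x" by (metis transpose_apply_other)
  with S twins_transpose_automorphism[OF assms(2-4)] have "transpose u v u = u"
    using \<open>u \<in> V\<close> unfolding vertex_determining_set_def by blast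
  with \<open>twins E u v\<close> show False by (simp add: twins_def)
qed

lemma edge_determining_set_meets_twins:
  assumes T: "edge_determining_set V E T" and "u \<in> V" "v \<in> V" "twins E u v"
  shows "\<exists>e\<in>T. u \<in> e \<or> v \<in> e"
proof (rule ccontr)
  assume "\<not> ?thesis"
  then have "\<forall>a b. {a, b} \<in> T \<longrightarrow> {transpose u v a, transpose u v b} = {a, b}"
    by (auto simp: transpose_def)
  with T twins_transpose_automorphism[OF assms(2-4)] have "transpose u v u = u"
    using \<open>u \<in> V\<close> unfolding edge_determining_set_def by blast
  with \<open>twins E u v\<close> show False by (simp add: twins_def)
qed

lemma card_le_card_if_meets_each:
  assumes "finite S" and meets: "\<And>i. i \<in> I \<Longrightarrow> S \<inter> A i \<noteq> {}"
    and unique: "\<And>i j s. i \<in> I \<Longrightarrow> j \<in> I \<Longrightarrow> s \<in> S \<Longrightarrow> s \<in> A i \<Longrightarrow> s \<in> A j \<Longrightarrow> i = j"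
  shows "card I \<le> card S"
proof -
  have "\<forall>i\<in>I. \<exists>s. s \<in> S \<inter> A i" using meets by blast
  then obtain f where f: "\<And>i. i \<in> I \<Longrightarrow> f i \<in> S \<inter> A i" by metis
  have "inj_on f I" using f unique by (intro inj_onI) (metis IntE)
  with f show ?thesis by (intro card_inj_on_le[OF _ _ \<open>finite S\<close>]) auto
qed

lemma Min_card_eqI:
  assumes "finite A" and "\<And>S. P S \<Longrightarrow> S \<subseteq> A" and "P S\<^sub>0" "card S\<^sub>0 = k"
    and "\<And>S. P S \<Longrightarrow> k \<le> card S"
  shows "Min {card S | S. P S} = k"
proof (rule Min_eqI)
  have "{card S | S. P S} \<subseteq> card ` Pow A" using assms(2) by blast
  then show "finite {card S | S. P S}" using assms(1) by (simp add: finite_subset)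
qed (use assms(3-5) in auto)

definition xa :: "nat \<Rightarrow> nat" where "xa i = 4*i+2"
definition xb :: "nat \<Rightarrow> nat" where "xb i = 4*i+3"
definition ya :: "nat \<Rightarrow> nat" where "ya i = 4*i+4"
definition yb :: "nat \<Rightarrow> nat" where "yb i = 4*i+5"

lemma gadget_labels_inject [simp]:
  "xa i = xa j \<longleftrightarrow> i = j" "xb i = xb j \<longleftrightarrow> i = j"
  "ya i = ya j \<longleftrightarrow> i = j" "yb i = yb j \<longleftrightarrow> i = j"
  by (simp_all add: xa_def xb_def ya_def yb_def)

text \<open>The simplifier rewrites \<open>1 :: nat\<close> to \<open>Suc 0\<close> (\<open>One_nat_def\<close>), so simp rules
  about the pendant vertex 1 are stated with \<open>Suc 0\<close>.\<close>
lemma gadget_labels_distinct [simp]: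
  "xa i \<noteq> 0" "xb i \<noteq> 0" "ya i \<noteq> 0" "yb i \<noteq> 0"
  "xa i \<noteq> xb j" "xa i \<noteq> ya j" "xa i \<noteq> yb j" "xb i \<noteq> ya j" "xb i \<noteq> yb j" "ya i \<noteq> yb j"
  "0 \<noteq> xa i" "0 \<noteq> xb i" "0 \<noteq> ya i" "0 \<noteq> yb i"
  "xb j \<noteq> xa i" "ya j \<noteq> xa i" "yb j \<noteq> xa i" "ya j \<noteq> xb i" "yb j \<noteq> xb i" "yb j \<noteq> ya i"
  "xa i \<noteq> Suc 0" "xb i \<noteq> Suc 0" "ya i \<noteq> Suc 0" "yb i \<noteq> Suc 0"
  "Suc 0 \<noteq> xa i" "Suc 0 \<noteq> xb i" "Suc 0 \<noteq> ya i" "Suc 0 \<noteq> yb i"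
  unfolding xa_def xb_def ya_def yb_def by presburger+

definition gadget_vertices :: "nat \<Rightarrow> nat set" where
  "gadget_vertices n = insert 0 (insert 1 (\<Union>i<n. {xa i, xb i, ya i, yb i}))"

lemma gadget_vertices_mem [simp]:
  "0 \<in> gadget_vertices n" "Suc 0 \<in> gadget_vertices n"
  "i < n \<Longrightarrow> xa i \<in> gadget_vertices n" "i < n \<Longrightarrow> xb i \<in> gadget_vertices n"
  "i < n \<Longrightarrow> ya i \<in> gadget_vertices n" "i < n \<Longrightarrow> yb i \<in> gadget_vertices n"
  by (auto simp: gadget_vertices_def)

definition gadget_arc :: "nat \<Rightarrow> nat \<Rightarrow> nat \<Rightarrow> bool" where
  "gadget_arc n u v \<longleftrightarrow> (u = 0 \<and> v = 1) \<or>
     (\<exists>i<n. (u = 0 \<and> v \<in> {xa i, xb i}) \<or> (u \<in> {xa i, xb i} \<and> v \<in> {ya i, yb i}))"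

definition gadget_edges :: "nat \<Rightarrow> nat set set" where
  "gadget_edges n = {{u, v} | u v. gadget_arc n u v}"

lemma mem_gadget_edges_iff: "{a, b} \<in> gadget_edges n \<longleftrightarrow> gadget_arc n a b \<or> gadget_arc n b a"
  unfolding gadget_edges_def by (auto simp: doubleton_eq_iff)

lemma nbhd_gadget_hub: "nbhd (gadget_edges n) 0 = insert 1 (\<Union>i<n. {xa i, xb i})"
  unfolding set_eq_iff mem_nbhd_iff mem_gadget_edges_iff gadget_arc_def by auto

lemma nbhd_gadget_pendant: "nbhd (gadget_edges n) 1 = {0}"
  unfolding set_eq_iff mem_nbhd_iff mem_gadget_edges_iff gadget_arc_def by auto

lemma nbhd_gadget_x:
  assumes "i < n"
  shows "nbhd (gadget_edges n) (xa i) = {0, ya i, yb i}"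
    and "nbhd (gadget_edges n) (xb i) = {0, ya i, yb i}"
  using assms unfolding set_eq_iff mem_nbhd_iff mem_gadget_edges_iff gadget_arc_def by auto

lemma nbhd_gadget_y:
  assumes "i < n"
  shows "nbhd (gadget_edges n) (ya i) = {xa i, xb i}"
    and "nbhd (gadget_edges n) (yb i) = {xa i, xb i}"
  using assms unfolding set_eq_iff mem_nbhd_iff mem_gadget_edges_iff gadget_arc_def by auto

lemma twins_gadget:
  assumes "i < n"
  shows "twins (gadget_edges n) (xa i) (xb i)" "twins (gadget_edges n) (ya i) (yb i)"
  using nbhd_gadget_x[OF assms] nbhd_gadget_y[OF assms] by (simp_all add: twins_def)

lemma simple_graph_gadget: "simple_graph (gadget_vertices n) (gadget_edges n)"
  unfolding simple_graph_def gadget_edges_def gadget_arc_def gadget_vertices_def by fastforce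

lemma gadget_x_pairs_independent:
  assumes "i < n" "p \<in> {xa i, xb i}" "q \<in> {xa j, xb j}"
  shows "{p, q} \<notin> gadget_edges n"
  using assms nbhd_gadget_x[OF assms(1)] unfolding mem_nbhd_iff set_eq_iff by auto

lemma gadget_edge_meets_one_x_pair:
  assumes e: "e \<in> gadget_edges n" and "i < n"
    and p: "p \<in> e" "p \<in> {xa i, xb i}" and q: "q \<in> e" "q \<in> {xa j, xb j}"
  shows "i = j"
proof (cases "p = q")
  case True
  then show ?thesis using p(2) q(2) by auto
next
  case False
  then have "e = {p, q}" by (rule simple_graph_edge_doubleton[OF simple_graph_gadget e p(1) q(1)])
  with e gadget_x_pairs_independent[OF assms(2) p(2) q(2)] show ?thesis by simp
qed

lemma gadget_reachable_from_hub:
  assumes "v \<in> gadget_vertices n"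
  shows "(adj (gadget_edges n))\<^sup>*\<^sup>* 0 v"
proof -
  have hub: "adj (gadget_edges n) 0 w" if "w \<in> nbhd (gadget_edges n) 0" for w
    using that by (simp add: adj_def mem_nbhd_iff)
  have "(adj (gadget_edges n))\<^sup>*\<^sup>* 0 v" if "i < n" "v \<in> {xa i, xb i, ya i, yb i}" for i
  proof -
    have x: "adj (gadget_edges n) 0 (xa i)" "adj (gadget_edges n) 0 (xb i)"
      using hub nbhd_gadget_hub \<open>i < n\<close> by auto
    have y: "adj (gadget_edges n) (xa i) (ya i)" "adj (gadget_edges n) (xa i) (yb i)"
      using nbhd_gadget_x(1)[OF \<open>i < n\<close>] by (auto simp: adj_def mem_nbhd_iff set_eq_iff)
    have "(adj (gadget_edges n))\<^sup>*\<^sup>* 0 (ya i)" "(adj (gadget_edges n))\<^sup>*\<^sup>* 0 (yb i)"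
      using x(1) y by (auto intro: converse_rtranclp_into_rtranclp)
    with x that(2) show ?thesis by auto
  qed
  moreover have "adj (gadget_edges n) 0 1" using hub nbhd_gadget_hub by auto
  ultimately show ?thesis using assms unfolding gadget_vertices_def by blast
qed

lemma connected_gadget: "connected_graph (gadget_vertices n) (gadget_edges n)"
proof -
  have "symp (adj (gadget_edges n))" by (auto simp: symp_def adj_def insert_commute)
  then have sym: "symp (adj (gadget_edges n))\<^sup>*\<^sup>*" by (rule symp_rtranclp)
  have "(adj (gadget_edges n))\<^sup>*\<^sup>* u v"
    if "u \<in> gadget_vertices n" "v \<in> gadget_vertices n" for u v
    using sympD[OF sym gadget_reachable_from_hub[OF that(1)]] gadget_reachable_from_hub[OF that(2)]
    by (rule rtranclp_trans)
  moreover have "gadget_vertices n \<noteq> {}" by (simp add: gadget_vertices_def)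
  ultimately show ?thesis
    unfolding connected_graph_def using simple_graph_gadget by blast
qed

lemma gadget_nbhd_not_subset_singleton:
  assumes "v \<in> gadget_vertices n" "v \<noteq> 1" "n \<ge> 1"
  shows "\<not> nbhd (gadget_edges n) v \<subseteq> {w}"
proof -
  have "v = 0 \<or> (\<exists>i<n. v \<in> {xa i, xb i, ya i, yb i})"
    using assms(1,2) unfolding gadget_vertices_def by blast
  then show ?thesis
  proof (elim disjE exE conjE)
    assume "v = 0"
    moreover have "1 \<in> nbhd (gadget_edges n) 0" "xa 0 \<in> nbhd (gadget_edges n) 0"
      using assms(3) nbhd_gadget_hub[of n] by auto
    moreover have "xa 0 \<noteq> 1" by simp
    ultimately show ?thesis by blast
  next
    fix i assume "i < n" "v \<in> {xa i, xb i, ya i, yb i}"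
    then show ?thesis using nbhd_gadget_x[OF \<open>i < n\<close>] nbhd_gadget_y[OF \<open>i < n\<close>] by auto
  qed
qed

lemma det_index_admissible_gadget:
  assumes "n \<ge> 1"
  shows "det_index_admissible (gadget_vertices n) (gadget_edges n)"
proof -
  have no_isolated: "{v. isolated (gadget_vertices n) (gadget_edges n) v} = {}"
  proof (intro equals0I)
    fix v assume "v \<in> {v. isolated (gadget_vertices n) (gadget_edges n) v}"
    then have v: "v \<in> gadget_vertices n" "nbhd (gadget_edges n) v = {}"
      unfolding isolated_def nbhd_def by auto
    then have "v \<noteq> 1" using nbhd_gadget_pendant[of n] by auto
    with v show False using gadget_nbhd_not_subset_singleton[OF v(1) _ assms, of 0] by simp
  qed
  have no_K2: "\<not> K2_component (gadget_edges n) u v" for u v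
  proof
    assume K: "K2_component (gadget_edges n) u v"
    then have V: "u \<in> gadget_vertices n" "v \<in> gadget_vertices n"
      using simple_graph_edge_vertices[OF simple_graph_gadget] unfolding K2_component_def by blast+
    have N: "nbhd (gadget_edges n) u \<subseteq> {v}" "nbhd (gadget_edges n) v \<subseteq> {u}"
      using K unfolding K2_component_def nbhd_def by (auto simp: insert_commute)
    have "u \<noteq> 1 \<or> v \<noteq> 1" using K unfolding K2_component_def by blast
    then show False
      using gadget_nbhd_not_subset_singleton[OF V(1) _ assms] N(1)
        gadget_nbhd_not_subset_singleton[OF V(2) _ assms] N(2) by blast
  qed
  show ?thesis unfolding det_index_admissible_def no_isolated using no_K2 by simp
qed

lemma gadget_automorphism_fixing_anchors:
  assumes A: "automorphism (gadget_vertices n) (gadget_edges n) \<phi>" and "n \<ge> 1"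
    and fix_xa: "\<And>i. i < n \<Longrightarrow> \<phi> (xa i) = xa i"
    and fix_ya: "\<And>i. i < n \<Longrightarrow> \<phi> (ya i) = ya i"
    and v: "v \<in> gadget_vertices n"
  shows "\<phi> v = v"
proof -
  note nb = automorphism_nbhd[OF A simple_graph_gadget]
  note inj = inj_on_eq_iff[OF automorphism_inj_on[OF A]]
  note nbhds = nbhd_gadget_hub nbhd_gadget_pendant nbhd_gadget_x nbhd_gadget_y
  have fix_xb: "\<phi> (xb i) = xb i" if i: "i < n" for i
  proof -
    have "\<phi> (xb i) \<in> {xa i, xb i}" using nb[of "xb i" "ya i"] fix_ya[OF i] nbhds i by simp
    moreover have "\<phi> (xb i) \<noteq> \<phi> (xa i)" using inj i by simp
    ultimately show ?thesis using fix_xa[OF i] by auto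
  qed
  have fix_hub: "\<phi> 0 = 0"
  proof -
    have n: "0 < n" using \<open>n \<ge> 1\<close> by simp
    have "\<phi> 0 \<in> {0, ya 0, yb 0}" using nb[of 0 "xa 0"] fix_xa[OF n] nbhds n by simp
    moreover have "\<phi> 0 \<noteq> \<phi> (ya 0)" using inj n by simp
    moreover have "\<phi> 0 \<noteq> yb 0" \<comment> \<open>the pendant vertex tells the hub apart from yb 0\<close>
    proof
      assume "\<phi> 0 = yb 0"
      then have "\<phi> 1 \<in> {\<phi> (xa 0), \<phi> (xb 0)}"
        using nb[of 1 0] nbhds fix_xa[OF n] fix_xb[OF n] n by simp
      then show False using inj n by auto
    qed
    ultimately show ?thesis using fix_ya[OF n] by auto
  qed
  have fix_yb: "\<phi> (yb i) = yb i" if i: "i < n" for i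
  proof -
    have "\<phi> (yb i) \<in> {0, ya i, yb i}" using nb[of "yb i" "xa i"] fix_xa[OF i] nbhds i by simp
    moreover have "\<phi> (yb i) \<noteq> \<phi> 0" "\<phi> (yb i) \<noteq> \<phi> (ya i)" using inj i by simp_all
    ultimately show ?thesis using fix_hub fix_ya[OF i] by auto
  qed
  have fix_pendant: "\<phi> 1 = 1"
  proof -
    have "\<phi> 1 \<in> insert 1 (\<Union>i<n. {xa i, xb i})" using nb[of 1 0] fix_hub nbhds by simp
    moreover have "\<phi> 1 \<noteq> xa i" "\<phi> 1 \<noteq> xb i" if "i < n" for i
      using inj[of 1 "xa i"] inj[of 1 "xb i"] fix_xa[OF that] fix_xb[OF that] that by auto
    ultimately show ?thesis by auto
  qed
  from v show ?thesis unfolding gadget_vertices_def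
    using fix_hub fix_pendant fix_xa fix_xb fix_ya fix_yb by auto
qed

lemma vertex_determining_set_gadget:
  assumes "n \<ge> 1"
  shows "vertex_determining_set (gadget_vertices n) (gadget_edges n) (xa ` {..<n} \<union> ya ` {..<n})"
  unfolding vertex_determining_set_def
proof (intro conjI allI impI ballI)
  show "xa ` {..<n} \<union> ya ` {..<n} \<subseteq> gadget_vertices n" by (auto simp: gadget_vertices_def)
  fix \<phi> v
  assume h: "automorphism (gadget_vertices n) (gadget_edges n) \<phi> \<and>
      (\<forall>x\<in>xa ` {..<n} \<union> ya ` {..<n}. \<phi> x = x)"
    and v: "v \<in> gadget_vertices n"
  show "\<phi> v = v"
    by (rule gadget_automorphism_fixing_anchors[OF conjunct1[OF h] assms _ _ v]) (use h in auto)
qed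

lemma card_gadget_anchors: "card (xa ` {..<n} \<union> ya ` {..<n}) = 2 * n"
  by (subst card_Un_disjoint) (auto simp: card_image inj_on_def)

lemma vertex_determining_set_gadget_card_ge:
  assumes S: "vertex_determining_set (gadget_vertices n) (gadget_edges n) S"
  shows "2 * n \<le> card S"
proof -
  define pair where "pair = (\<lambda>(i, b). if b then {xa i, xb i} else {ya i, yb i})"
  have "card ({..<n} \<times> (UNIV :: bool set)) \<le> card S"
  proof (rule card_le_card_if_meets_each[where A = pair])
    show "finite S"
      using S unfolding vertex_determining_set_def gadget_vertices_def by (auto intro: finite_subset)
    show "S \<inter> pair ib \<noteq> {}" if "ib \<in> {..<n} \<times> UNIV" for ib
    proof -
      obtain i b where "ib = (i, b)" by (cases ib)
      with that have ib: "ib = (i, b)" "i < n" by auto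
      then show ?thesis using vertex_determining_set_meets_twins[OF S] twins_gadget[OF ib(2)]
        unfolding pair_def by (cases b) auto
    qed
    show "ib = jb" if "s \<in> pair ib" "s \<in> pair jb" for ib jb s
      using that unfolding pair_def by (auto split: if_splits prod.splits)
  qed
  then show ?thesis by (simp add: card_cartesian_product)
qed

lemma edge_determining_set_gadget:
  assumes "n \<ge> 1"
  shows "edge_determining_set (gadget_vertices n) (gadget_edges n) ((\<lambda>i. {xa i, ya i}) ` {..<n})"
  unfolding edge_determining_set_def
proof (intro conjI allI impI ballI)
  show "(\<lambda>i. {xa i, ya i}) ` {..<n} \<subseteq> gadget_edges n"
    using nbhd_gadget_x(1) by (auto simp: mem_nbhd_iff[symmetric])
  fix \<phi> v
  assume h: "automorphism (gadget_vertices n) (gadget_edges n) \<phi> \<and>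
      (\<forall>u v. {u, v} \<in> (\<lambda>i. {xa i, ya i}) ` {..<n} \<longrightarrow> {\<phi> u, \<phi> v} = {u, v})"
    and v: "v \<in> gadget_vertices n"
  then have A: "automorphism (gadget_vertices n) (gadget_edges n) \<phi>" by blast
  have "\<phi> (xa i) = xa i \<and> \<phi> (ya i) = ya i" if i: "i < n" for i
  proof -
    have "{\<phi> (xa i), \<phi> (ya i)} = {xa i, ya i}" using h i by simp
    moreover have "\<phi> (xa i) \<noteq> ya i"
    proof
      assume "\<phi> (xa i) = ya i"
      then have "card (nbhd (gadget_edges n) (ya i)) = card (nbhd (gadget_edges n) (xa i))"
        using automorphism_degree[OF A simple_graph_gadget, of "xa i"] i by simp
      then show False using nbhd_gadget_x(1)[OF i] nbhd_gadget_y(1)[OF i] by simp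
    qed
    ultimately show ?thesis by (auto simp: doubleton_eq_iff)
  qed
  then show "\<phi> v = v" by (intro gadget_automorphism_fixing_anchors[OF A assms _ _ v]) simp_all
qed

lemma card_gadget_anchor_edges: "card ((\<lambda>i. {xa i, ya i}) ` {..<n}) = n"
  by (subst card_image) (auto simp: inj_on_def doubleton_eq_iff)

lemma edge_determining_set_gadget_card_ge:
  assumes T: "edge_determining_set (gadget_vertices n) (gadget_edges n) T"
  shows "n \<le> card T"
proof -
  have TE: "T \<subseteq> gadget_edges n" using T unfolding edge_determining_set_def by blast
  have "card {..<n} \<le> card T"
  proof (rule card_le_card_if_meets_each[where A = "\<lambda>i. {e. xa i \<in> e \<or> xb i \<in> e}"])
    show "finite T"
      using TE simple_graph_finite_edges[OF simple_graph_gadget] by (rule finite_subset)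
    show "T \<inter> {e. xa i \<in> e \<or> xb i \<in> e} \<noteq> {}" if "i \<in> {..<n}" for i
      using edge_determining_set_meets_twins[OF T _ _ twins_gadget(1)] that by auto
    show "i = j" if "i \<in> {..<n}" "e \<in> T"
      "e \<in> {e. xa i \<in> e \<or> xb i \<in> e}" "e \<in> {e. xa j \<in> e \<or> xb j \<in> e}" for i j e
      using that TE gadget_edge_meets_one_x_pair[of e n i] by blast
  qed
  then show ?thesis by simp
qed

theorem theorem9:
  fixes n :: nat
  assumes "n \<ge> 1"
  shows "\<exists>(V :: nat set) (E :: nat set set).
           connected_graph V E \<and> det_index_admissible V E \<and>
           determining_number V E = 2 * n \<and> determining_index V E = n"
proof (intro exI conjI)
  let ?V = "gadget_vertices n" and ?E = "gadget_edges n"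
  show "connected_graph ?V ?E" by (rule connected_gadget)
  show "det_index_admissible ?V ?E" by (rule det_index_admissible_gadget[OF assms])
  show "determining_number ?V ?E = 2 * n"
    unfolding determining_number_def
  proof (rule Min_card_eqI)
    show "finite ?V" by (simp add: gadget_vertices_def)
    show "vertex_determining_set ?V ?E (xa ` {..<n} \<union> ya ` {..<n})"
      by (rule vertex_determining_set_gadget[OF assms])
  qed (auto simp: vertex_determining_set_def card_gadget_anchors vertex_determining_set_gadget_card_ge)
  show "determining_index ?V ?E = n"
    unfolding determining_index_def
  proof (rule Min_card_eqI)
    show "finite ?E" by (rule simple_graph_finite_edges[OF simple_graph_gadget])
    show "edge_determining_set ?V ?E ((\<lambda>i. {xa i, ya i}) ` {..<n})"
      by (rule edge_determining_set_gadget[OF assms])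
  qed (auto simp: edge_determining_set_def card_gadget_anchor_edges edge_determining_set_gadget_card_ge)
qed

end
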